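(* Let $s\ge2$ be an integer and $\varPhi$ the family of (interiors of) $s$-adic cylinders $\bigl(\frac{m}{s^n},\frac{m+1}{s^n}\bigr)$, $n\ge1$, $0\le m<s^n$. Then $\varPhi$ is faithful for packing dimension calculation: $\dim_P(E,\varPhi)=\dim_{P(\mathit{unc})}(E)$ for every $E\subset[0,1]$.
   Context: In $\mathbb R$: an uncentered $\varepsilon$-packing of $E$ is a countable family of pairwise disjoint open intervals of length $\le\varepsilon$ each meeting $E$; $\mathcal P^\alpha_{\varepsilon(\mathit{unc})}(E)=\sup\sum|E_i|^\alpha$, $\mathcal P^\alpha_{0(\mathit{unc})}=\lim_{\varepsilon\to0}$, $\mathcal P^\alpha_{(\mathit{unc})}(E)=\inf\{\sum_j\mathcal P^\alpha_{0(\mathit{unc})}(E_j):E\subset\bigcup E_j\}$, $\dim_{P(\mathit{unc})}(E)=\inf\{\alpha:\mathcal P^\alpha_{(\mathit{unc})}(E)=0\}$; $\dim_P(E,\varPhi)$ is the same using only packings by intervals from $\varPhi$. *)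

theory Defs
  imports "HOL-Analysis.Analysis"
begin

text \<open>Open intervals are represented by their endpoint pairs (a,b), meaning the
  interval a < x < b.  A family of admissible intervals is a set of such pairs.\<close>

definition is_packing :: "(real \<times> real) set \<Rightarrow> real \<Rightarrow> real set \<Rightarrow> (real \<times> real) set \<Rightarrow> bool" where
  "is_packing Phi eps E F \<longleftrightarrow>
     countable F \<and> F \<subseteq> Phi \<and>
     (\<forall>(a,b)\<in>F. a < b \<and> b - a \<le> eps \<and> {a<..<b} \<inter> E \<noteq> {}) \<and>
     (\<forall>p\<in>F. \<forall>q\<in>F. p \<noteq> q \<longrightarrow> {fst p<..<snd p} \<inter> {fst q<..<snd q} = {})"

definition pack_eps :: "(real \<times> real) set \<Rightarrow> real \<Rightarrow> real \<Rightarrow> real set \<Rightarrow> ennreal" where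
  "pack_eps Phi \<alpha> eps E =
     (SUP F \<in> {F. is_packing Phi eps E F}. \<Sum>\<^sub>\<infinity> p\<in>F. ennreal ((snd p - fst p) powr \<alpha>))"

text \<open>pack_eps is monotone in eps, so the limit eps -> 0 equals the infimum over eps > 0.\<close>
definition pack_zero :: "(real \<times> real) set \<Rightarrow> real \<Rightarrow> real set \<Rightarrow> ennreal" where
  "pack_zero Phi \<alpha> E = (INF eps \<in> {0<..}. pack_eps Phi \<alpha> eps E)"

definition pack_measure :: "(real \<times> real) set \<Rightarrow> real \<Rightarrow> real set \<Rightarrow> ennreal" where
  "pack_measure Phi \<alpha> E =
     (INF C \<in> {C :: nat \<Rightarrow> real set. E \<subseteq> (\<Union>j. C j)}. \<Sum>j. pack_zero Phi \<alpha> (C j))"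

definition pack_dim :: "(real \<times> real) set \<Rightarrow> real set \<Rightarrow> real" where
  "pack_dim Phi E = Inf {\<alpha>. 0 \<le> \<alpha> \<and> pack_measure Phi \<alpha> E = 0}"

definition unc_intervals :: "(real \<times> real) set" where
  "unc_intervals = {(a,b). a < b}"

definition dim_P_unc :: "real set \<Rightarrow> real" where
  "dim_P_unc E = pack_dim unc_intervals E"

definition s_adic_cylinders :: "nat \<Rightarrow> (real \<times> real) set" where
  "s_adic_cylinders s =
     {(real m / real s ^ n, (real m + 1) / real s ^ n) | n m. 1 \<le> n \<and> m < s ^ n}"

end

theory Submission
  imports Defs
begin

text \<open>Every s-adic cylinder is an admissible interval, so the s-adic packing measures are dominated
  by the uncentered ones. Conversely, a finite s-adic \<alpha>-packing premeasure of C means that only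
  O(s^(\<alpha> n)) cylinders of level n meet C. Away from the countable set of s-adic points, an
  arbitrary interval meeting C whose length lies in (s^-(n+1), s^-n] contains an endpoint of a
  level-(n+1) cylinder meeting C, and disjoint intervals contain distinct endpoints. So a packing of
  C has O(s^(\<alpha> n)) intervals at level n, and for \<beta> > \<alpha> its \<beta>-sum is bounded by a
  geometric tail that vanishes as the mesh goes to 0.\<close>

section \<open>Packing measures\<close>

lemma is_packing_mono:
  "is_packing Phi eps E F \<Longrightarrow> Phi \<subseteq> Psi \<Longrightarrow> E \<subseteq> E' \<Longrightarrow> is_packing Psi eps E' F"
  unfolding is_packing_def by fast

lemma is_packingD:
  assumes "is_packing Phi eps E F" "p \<in> F"
  shows "fst p < snd p" "snd p - fst p \<le> eps" "{fst p<..<snd p} \<inter> E \<noteq> {}"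
  using assms unfolding is_packing_def by (cases p, fastforce)+

lemma is_packing_disjoint:
  assumes "is_packing Phi eps E F" "p \<in> F" "p' \<in> F" "p \<noteq> p'"
  shows "{fst p<..<snd p} \<inter> {fst p'<..<snd p'} = {}"
  using assms unfolding is_packing_def by blast

lemma pack_eps_mono:
  "Phi \<subseteq> Psi \<Longrightarrow> E \<subseteq> E' \<Longrightarrow> pack_eps Phi \<alpha> eps E \<le> pack_eps Psi \<alpha> eps E'"
  unfolding pack_eps_def by (rule SUP_subset_mono) (auto intro: is_packing_mono)

lemma pack_zero_mono:
  "Phi \<subseteq> Psi \<Longrightarrow> E \<subseteq> E' \<Longrightarrow> pack_zero Phi \<alpha> E \<le> pack_zero Psi \<alpha> E'"
  unfolding pack_zero_def by (rule INF_mono) (auto intro: pack_eps_mono)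

lemma pack_measure_mono:
  assumes "Phi \<subseteq> Psi"
  shows "pack_measure Phi \<alpha> E \<le> pack_measure Psi \<alpha> E"
  unfolding pack_measure_def
  by (rule INF_mono, rule bexI, rule suminf_le) (use assms in \<open>auto intro: pack_zero_mono\<close>)

lemma pack_eps_le_finite_sums:
  assumes "\<And>F G. is_packing Phi eps E F \<Longrightarrow> finite G \<Longrightarrow> G \<subseteq> F \<Longrightarrow>
             (\<Sum>p\<in>G. (snd p - fst p) powr \<alpha>) \<le> c"
  shows "pack_eps Phi \<alpha> eps E \<le> ennreal c"
  unfolding pack_eps_def
proof (rule SUP_least, rule infsum_le_finite_sums)
  fix F G assume "F \<in> {F. is_packing Phi eps E F}" "finite G" "G \<subseteq> F"
  then have "(\<Sum>p\<in>G. (snd p - fst p) powr \<alpha>) \<le> c"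
    using assms by simp
  then show "(\<Sum>p\<in>G. ennreal ((snd p - fst p) powr \<alpha>)) \<le> ennreal c"
    by (simp add: sum_ennreal ennreal_leI)
qed (rule nonneg_summable_on_complete, simp)

lemma pack_zero_eq_0I:
  assumes "\<And>\<delta>. \<delta> > 0 \<Longrightarrow> \<exists>eps>0. pack_eps Phi \<alpha> eps E \<le> ennreal \<delta>"
  shows "pack_zero Phi \<alpha> E = 0"
proof -
  have "pack_zero Phi \<alpha> E \<le> 0 + ennreal \<delta>" if "\<delta> > 0" for \<delta>
    using assms[OF that] unfolding pack_zero_def by (auto intro: INF_lower2)
  then show ?thesis
    using ennreal_le_epsilon[of 0 "pack_zero Phi \<alpha> E"] by simp
qed

lemma pack_zero_singleton:
  assumes "\<beta> > 0"
  shows "pack_zero Phi \<beta> {q} = 0"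
proof (rule pack_zero_eq_0I)
  fix \<delta> :: real assume "\<delta> > 0"
  define eps where "eps = \<delta> powr (1 / \<beta>)"
  have eps: "eps > 0" "eps powr \<beta> = \<delta>"
    using \<open>\<delta> > 0\<close> assms by (simp_all add: eps_def powr_powr)
  have "(\<Sum>p\<in>G. (snd p - fst p) powr \<beta>) \<le> \<delta>"
    if P: "is_packing Phi eps {q} F" and G: "finite G" "G \<subseteq> F" for F G
  proof -
    have "p = p'" if "p \<in> G" "p' \<in> G" for p p'
    proof (rule ccontr)
      assume "p \<noteq> p'"
      moreover have "q \<in> {fst p<..<snd p}" "q \<in> {fst p'<..<snd p'}"
        using is_packingD(3)[OF P] that G by blast+
      ultimately show False
        using is_packing_disjoint[OF P] that G by blast
    qed
    show ?thesis
    proof (cases "G = {}")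
      case False
      then obtain p where "p \<in> G" by blast
      with \<open>\<And>p p'. p \<in> G \<Longrightarrow> p' \<in> G \<Longrightarrow> p = p'\<close> have "G = {p}" by blast
      moreover have "(snd p - fst p) powr \<beta> \<le> eps powr \<beta>"
        using is_packingD(1,2)[OF P, of p] \<open>p \<in> G\<close> G assms by (intro powr_mono2) auto
      ultimately show ?thesis using eps by simp
    qed (use \<open>\<delta> > 0\<close> in simp)
  qed
  then show "\<exists>eps>0. pack_eps Phi \<beta> eps {q} \<le> ennreal \<delta>"
    using eps(1) pack_eps_le_finite_sums by blast
qed

lemma pack_measure_eq_0I:
  fixes C :: "nat \<Rightarrow> real set"
  assumes "E \<subseteq> (\<Union>j. C j)" "\<And>j. pack_zero Phi \<alpha> (C j) = 0"
  shows "pack_measure Phi \<alpha> E = 0"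
proof -
  have "pack_measure Phi \<alpha> E \<le> (\<Sum>j. pack_zero Phi \<alpha> (C j))"
    unfolding pack_measure_def using assms(1) by (intro INF_lower) auto
  with assms(2) show ?thesis by simp
qed

lemma pack_measure_eq_0_mod_countable:
  fixes C :: "nat \<Rightarrow> real set"
  assumes "\<beta> > 0" "countable Q" "E - Q \<subseteq> (\<Union>j. C j)" "\<And>j. pack_zero Phi \<beta> (C j) = 0"
  shows "pack_measure Phi \<beta> E = 0"
proof -
  \<comment> \<open>from_nat_into is junk on the empty set, hence the inserted point\<close>
  define g where "g = from_nat_into (insert 0 Q)"
  have Q: "Q \<subseteq> range g"
    unfolding g_def using assms(2) range_from_nat_into[of "insert 0 Q"] by auto
  define D where "D j = (if even j then C (j div 2) else {g (j div 2)})" for j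
  show ?thesis
  proof (rule pack_measure_eq_0I)
    show "E \<subseteq> (\<Union>j. D j)"
    proof
      fix x assume "x \<in> E"
      show "x \<in> (\<Union>j. D j)"
      proof (cases "x \<in> Q")
        case True
        then obtain i where "x = g i" using Q by blast
        then have "x \<in> D (2 * i + 1)" unfolding D_def by simp
        then show ?thesis by blast
      next
        case False
        then obtain i where "x \<in> C i" using \<open>x \<in> E\<close> assms(3) by blast
        then have "x \<in> D (2 * i)" unfolding D_def by simp
        then show ?thesis by blast
      qed
    qed
    show "pack_zero Phi \<beta> (D j) = 0" for j
      unfolding D_def using assms(4) pack_zero_singleton[OF assms(1)] by simp
  qed
qed

lemma pack_dim_eqI:
  assumes "\<And>\<alpha>. pack_measure Psi \<alpha> E = 0 \<Longrightarrow> pack_measure Phi \<alpha> E = 0"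
    and "\<exists>\<alpha>\<ge>0. pack_measure Psi \<alpha> E = 0"
    and "\<And>\<alpha> \<beta>. 0 \<le> \<alpha> \<Longrightarrow> \<alpha> < \<beta> \<Longrightarrow> pack_measure Phi \<alpha> E = 0 \<Longrightarrow> pack_measure Psi \<beta> E = 0"
  shows "pack_dim Phi E = pack_dim Psi E"
proof -
  define A where "A = {\<alpha>. 0 \<le> \<alpha> \<and> pack_measure Phi \<alpha> E = 0}"
  define B where "B = {\<alpha>. 0 \<le> \<alpha> \<and> pack_measure Psi \<alpha> E = 0}"
  have "B \<subseteq> A" "B \<noteq> {}" using assms(1,2) unfolding A_def B_def by auto
  have bdd: "bdd_below A" "bdd_below B"
    unfolding A_def B_def by (auto intro: bdd_belowI[of _ 0])
  have "Inf A \<le> Inf B" using \<open>B \<subseteq> A\<close> \<open>B \<noteq> {}\<close> bdd(1) by (intro cInf_superset_mono) auto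
  moreover have "Inf B \<le> Inf A"
  proof (rule dense_ge)
    fix \<beta> assume "Inf A < \<beta>"
    moreover have "A \<noteq> {}" using \<open>B \<subseteq> A\<close> \<open>B \<noteq> {}\<close> by blast
    ultimately obtain \<alpha> where "\<alpha> \<in> A" "\<alpha> < \<beta>"
      using cInf_lessD by blast
    then have "\<beta> \<in> B" using assms(3) unfolding A_def B_def by auto
    then show "Inf B \<le> \<beta>" using bdd(2) by (rule cInf_lower)
  qed
  ultimately show ?thesis unfolding pack_dim_def A_def B_def by simp
qed

section \<open>s-adic cylinders\<close>

definition sadic_points :: "nat \<Rightarrow> real set" where
  "sadic_points s = (\<lambda>(m, n). real m / real s ^ n) ` UNIV"

definition sadic_cylinder :: "nat \<Rightarrow> nat \<Rightarrow> nat \<Rightarrow> real set" where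
  "sadic_cylinder s n m = {real m / real s ^ n <..< (real m + 1) / real s ^ n}"

definition cylinders_meeting :: "nat \<Rightarrow> real set \<Rightarrow> nat \<Rightarrow> nat set" where
  "cylinders_meeting s C n = {m. m < s ^ n \<and> sadic_cylinder s n m \<inter> C \<noteq> {}}"

text \<open>The number of level-n cylinders meeting C is O(s^(\<alpha> n)), i.e. the upper box-counting
  dimension of C is at most \<alpha>.\<close>
definition cylinder_count_bounded :: "nat \<Rightarrow> real \<Rightarrow> real set \<Rightarrow> bool" where
  "cylinder_count_bounded s \<alpha> C \<longleftrightarrow>
     (\<exists>M n0. \<forall>n\<ge>n0. real (card (cylinders_meeting s C n)) \<le> M * real s powr (\<alpha> * real n))"

lemma countable_sadic_points: "countable (sadic_points s)"
  unfolding sadic_points_def by simp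

lemma sadic_pointI: "real m / real s ^ n \<in> sadic_points s"
  unfolding sadic_points_def by (auto intro!: image_eqI[where x="(m, n)"])

lemma finite_cylinders_meeting: "finite (cylinders_meeting s C n)"
  unfolding cylinders_meeting_def by auto

lemma card_cylinders_meeting_le: "card (cylinders_meeting s C n) \<le> s ^ n"
  using card_mono[of "{..<s ^ n}" "cylinders_meeting s C n"]
  unfolding cylinders_meeting_def by auto

lemma cylinders_meeting_mono: "C \<subseteq> C' \<Longrightarrow> cylinders_meeting s C n \<subseteq> cylinders_meeting s C' n"
  unfolding cylinders_meeting_def by auto

lemma cylinder_count_bounded_mono:
  assumes "cylinder_count_bounded s \<alpha> C'" "C \<subseteq> C'"
  shows "cylinder_count_bounded s \<alpha> C"
proof -
  have "card (cylinders_meeting s C n) \<le> card (cylinders_meeting s C' n)" for n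
    using assms(2) by (intro card_mono finite_cylinders_meeting cylinders_meeting_mono)
  then show ?thesis
    using assms(1) unfolding cylinder_count_bounded_def by (meson of_nat_le_iff order_trans)
qed

lemma cylinder_count_bounded_1:
  assumes "s \<ge> 1"
  shows "cylinder_count_bounded s 1 C"
  unfolding cylinder_count_bounded_def
proof (intro exI allI impI)
  fix n :: nat
  have "real (card (cylinders_meeting s C n)) \<le> real s ^ n"
    using card_cylinders_meeting_le by (metis of_nat_le_iff of_nat_power)
  then show "real (card (cylinders_meeting s C n)) \<le> 1 * real s powr (1 * real n)"
    using assms by (simp add: powr_realpow)
qed

lemma sadic_cylinders_disjoint:
  assumes "s > 0" "m \<noteq> m'"
  shows "sadic_cylinder s n m \<inter> sadic_cylinder s n m' = {}"
proof -
  have "(real a + 1) / real s ^ n \<le> real b / real s ^ n" if "a < b" for a b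
    using that assms(1) by (intro divide_right_mono) auto
  then show ?thesis
    using assms(2) unfolding sadic_cylinder_def
    by (cases "m < m'") (fastforce simp: linorder_neq_iff)+
qed

lemma sadic_cylinder_containing:
  assumes "s \<ge> 2" and x: "x \<in> {0<..<1} - sadic_points s"
  obtains m where "m < s ^ n" "x \<in> sadic_cylinder s n m"
proof -
  define m where "m = nat \<lfloor>x * real s ^ n\<rfloor>"
  have sn: "real s ^ n > 0" using assms by simp
  have "real m = of_int \<lfloor>x * real s ^ n\<rfloor>"
    using x sn unfolding m_def by simp
  then have m: "real m \<le> x * real s ^ n" "x * real s ^ n < real m + 1"
    by linarith+
  have "x * real s ^ n \<noteq> real m"
  proof
    assume "x * real s ^ n = real m"
    then have "x = real m / real s ^ n" using sn by (simp add: field_simps)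
    then show False using x sadic_pointI[of m s n] by simp
  qed
  with m have "real m < x * real s ^ n" by simp
  with m(2) sn have "x \<in> sadic_cylinder s n m"
    unfolding sadic_cylinder_def by (simp add: field_simps)
  moreover have "x * real s ^ n < real s ^ n" using x sn by simp
  with m(1) have "real m < real s ^ n" by linarith
  then have "m < s ^ n" by (metis of_nat_less_imp_less of_nat_power)
  ultimately show thesis using that by blast
qed

lemma s_adic_cylinders_subset_unc_intervals: "s > 0 \<Longrightarrow> s_adic_cylinders s \<subseteq> unc_intervals"
  unfolding s_adic_cylinders_def unc_intervals_def by (auto intro!: divide_strict_right_mono)

lemma cylinders_meeting_le_pack_eps:
  assumes "s \<ge> 2" "n \<ge> 1" "1 / real s ^ n \<le> eps"
  shows "ennreal (real (card (cylinders_meeting s C n)) * (1 / real s ^ n) powr \<alpha>)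
           \<le> pack_eps (s_adic_cylinders s) \<alpha> eps C"
proof -
  define f where "f m = (real m / real s ^ n, (real m + 1) / real s ^ n)" for m
  define F where "F = f ` cylinders_meeting s C n"
  have sn: "real s ^ n > 0" using assms by simp
  have len: "snd (f m) - fst (f m) = 1 / real s ^ n" for m
    unfolding f_def by (simp add: diff_divide_distrib[symmetric])
  have cyl: "{fst (f m)<..<snd (f m)} = sadic_cylinder s n m" for m
    unfolding f_def sadic_cylinder_def by simp
  have inj: "inj_on f (cylinders_meeting s C n)"
    unfolding f_def inj_on_def using sn by auto
  have "is_packing (s_adic_cylinders s) eps C F"
    unfolding is_packing_def
  proof (intro conjI ballI impI)
    show "countable F"
      unfolding F_def by (simp add: countable_finite finite_cylinders_meeting)
    show "F \<subseteq> s_adic_cylinders s"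
      using assms(2) unfolding F_def f_def s_adic_cylinders_def cylinders_meeting_def by auto
  next
    fix p assume "p \<in> F"
    then show "case p of (a, b) \<Rightarrow> a < b \<and> b - a \<le> eps \<and> {a<..<b} \<inter> C \<noteq> {}"
      using len assms(3) sn unfolding F_def f_def cylinders_meeting_def sadic_cylinder_def
      by (auto simp: divide_strict_right_mono)
  next
    fix p q assume "p \<in> F" "q \<in> F" "p \<noteq> q"
    then obtain m m' where "p = f m" "q = f m'" "m \<noteq> m'"
      unfolding F_def by blast
    then show "{fst p<..<snd p} \<inter> {fst q<..<snd q} = {}"
      using sadic_cylinders_disjoint[of s] assms(1) by (simp add: cyl)
  qed
  then have "(\<Sum>\<^sub>\<infinity>p\<in>F. ennreal ((snd p - fst p) powr \<alpha>)) \<le> pack_eps (s_adic_cylinders s) \<alpha> eps C"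
    unfolding pack_eps_def by (intro SUP_upper) auto
  moreover have "(\<Sum>\<^sub>\<infinity>p\<in>F. ennreal ((snd p - fst p) powr \<alpha>))
      = ennreal (real (card (cylinders_meeting s C n)) * (1 / real s ^ n) powr \<alpha>)"
    unfolding F_def using finite_cylinders_meeting
    by (simp add: sum.reindex[OF inj] len ennreal_of_nat_eq_real_of_nat ennreal_mult)
  ultimately show ?thesis by simp
qed

lemma cylinder_count_bounded_if_pack_zero_finite:
  assumes s: "s \<ge> 2" and fin: "pack_zero (s_adic_cylinders s) \<alpha> C < \<infinity>"
  shows "cylinder_count_bounded s \<alpha> C"
proof -
  obtain eps where "eps > 0" and eps: "pack_eps (s_adic_cylinders s) \<alpha> eps C < \<infinity>"
    using fin unfolding pack_zero_def INF_less_iff by auto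
  define M where "M = enn2real (pack_eps (s_adic_cylinders s) \<alpha> eps C)"
  obtain N where N: "(1 / real s) ^ N < eps"
    using real_arch_pow_inv[OF \<open>eps > 0\<close>, of "1 / real s"] s by auto
  have "real (card (cylinders_meeting s C n)) \<le> M * real s powr (\<alpha> * real n)"
    if n: "n \<ge> max 1 N" for n
  proof -
    have "1 / real s ^ n \<le> (1 / real s) ^ N"
      using n s by (simp add: power_one_over[symmetric] power_decreasing)
    then have "ennreal (real (card (cylinders_meeting s C n)) * (1 / real s ^ n) powr \<alpha>) \<le> ennreal M"
      using cylinders_meeting_le_pack_eps[OF s, of n eps C \<alpha>] n N eps
      unfolding M_def by (simp add: less_top)
    then have "real (card (cylinders_meeting s C n)) * (1 / real s ^ n) powr \<alpha> \<le> M"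
      using ennreal_le_iff[OF enn2real_nonneg] unfolding M_def by blast
    moreover have "(1 / real s ^ n) powr \<alpha> = 1 / real s powr (\<alpha> * real n)"
      using s by (simp add: powr_divide powr_realpow[symmetric] powr_powr mult.commute)
    ultimately show ?thesis
      using s by (simp add: field_simps)
  qed
  then show ?thesis
    unfolding cylinder_count_bounded_def by blast
qed

section \<open>Packings of sets meeting few cylinders\<close>

definition length_level :: "real \<Rightarrow> real \<Rightarrow> nat" where
  "length_level q l = (LEAST n. q ^ Suc n < l)"

lemma length_level:
  fixes q l :: real
  assumes q: "0 < q" "q < 1" and l: "0 < l" "l \<le> q ^ n1"
  shows "q ^ Suc (length_level q l) < l" "l \<le> q ^ length_level q l" "n1 \<le> length_level q l"
proof -
  obtain N where "q ^ N < l" using real_arch_pow_inv[OF l(1) q(2)] by blast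
  then have "\<exists>n. q ^ Suc n < l"
    using q by (metis le_less_trans power_decreasing le_SucI order_refl less_imp_le)
  then show below: "q ^ Suc (length_level q l) < l"
    unfolding length_level_def by (rule LeastI_ex)
  show "l \<le> q ^ length_level q l"
  proof (cases "length_level q l")
    case 0
    then show ?thesis using l q by (metis order_trans power_0 power_le_one less_imp_le)
  next
    case (Suc n)
    then have "\<not> q ^ Suc n < l"
      using not_less_Least[of n "\<lambda>n. q ^ Suc n < l"] unfolding length_level_def by simp
    with Suc show ?thesis by simp
  qed
  show "n1 \<le> length_level q l"
  proof (rule ccontr)
    assume "\<not> n1 \<le> length_level q l"
    then have "q ^ n1 \<le> q ^ Suc (length_level q l)" using q by (intro power_decreasing) auto
    with below l show False by simp
  qed
qed

lemma sum_power_le_geometric: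
  fixes r :: real
  assumes "0 \<le> r" "r < 1" "finite S" "\<And>n. n \<in> S \<Longrightarrow> n1 \<le> n"
  shows "(\<Sum>n\<in>S. r ^ n) \<le> r ^ n1 / (1 - r)"
proof -
  define N where "N = Max (insert n1 S)"
  have "S \<subseteq> {n1..N}" "n1 \<le> N" using assms(3,4) unfolding N_def by auto
  then have "(\<Sum>n\<in>S. r ^ n) \<le> (\<Sum>n\<in>{n1..N}. r ^ n)"
    using assms(1) by (intro sum_mono2) auto
  also have "\<dots> = (r ^ n1 - r ^ Suc N) / (1 - r)"
    using \<open>n1 \<le> N\<close> assms(2) by (simp add: sum_gp)
  also have "\<dots> \<le> r ^ n1 / (1 - r)"
    using assms(1,2) by (intro divide_right_mono) auto
  finally show ?thesis .
qed

text \<open>An interval longer than an s-adic cylinder of level n and meeting it contains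
  one of the two endpoints of that cylinder; disjoint intervals contain distinct endpoints.\<close>
lemma card_disjoint_long_intervals_le:
  assumes s: "s \<ge> 2" and C: "C \<subseteq> {0<..<1} - sadic_points s"
    and long: "\<And>p. p \<in> G \<Longrightarrow> 1 / real s ^ n < snd p - fst p \<and> {fst p<..<snd p} \<inter> C \<noteq> {}"
    and disj: "\<And>p p'. p \<in> G \<Longrightarrow> p' \<in> G \<Longrightarrow> p \<noteq> p' \<Longrightarrow> {fst p<..<snd p} \<inter> {fst p'<..<snd p'} = {}"
  shows "card G \<le> 2 * card (cylinders_meeting s C n)"
proof -
  have "\<forall>p\<in>G. \<exists>m. m \<in> cylinders_meeting s C n \<and> sadic_cylinder s n m \<inter> {fst p<..<snd p} \<noteq> {}"
  proof
    fix p assume "p \<in> G"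
    then obtain x where x: "x \<in> C" "x \<in> {fst p<..<snd p}" using long by blast
    then obtain m where "m < s ^ n" "x \<in> sadic_cylinder s n m"
      using sadic_cylinder_containing[OF s] C by blast
    with x show "\<exists>m. m \<in> cylinders_meeting s C n \<and> sadic_cylinder s n m \<inter> {fst p<..<snd p} \<noteq> {}"
      unfolding cylinders_meeting_def by blast
  qed
  then obtain m where m: "\<And>p. p \<in> G \<Longrightarrow> m p \<in> cylinders_meeting s C n \<and>
      sadic_cylinder s n (m p) \<inter> {fst p<..<snd p} \<noteq> {}"
    by metis
  define u where "u p = real (m p) / real s ^ n" for p
  define g where "g p = (m p, fst p < u p)" for p
  define endpoint where "endpoint p = (if fst p < u p then u p else u p + 1 / real s ^ n)" for p
  have endpoint: "endpoint p \<in> {fst p<..<snd p}" if "p \<in> G" for p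
    using m[OF that] long[OF that]
    unfolding endpoint_def u_def sadic_cylinder_def by (auto simp: add_divide_distrib)
  have "inj_on g G"
  proof (rule inj_onI, rule ccontr)
    fix p p' assume "p \<in> G" "p' \<in> G" "g p = g p'" "p \<noteq> p'"
    then have "endpoint p = endpoint p'" unfolding g_def endpoint_def u_def by auto
    with endpoint \<open>p \<in> G\<close> \<open>p' \<in> G\<close> disj[OF \<open>p \<in> G\<close> \<open>p' \<in> G\<close> \<open>p \<noteq> p'\<close>] show False
      by (metis IntI empty_iff)
  qed
  then have "card G = card (g ` G)" by (simp add: card_image)
  also have "\<dots> \<le> card (cylinders_meeting s C n \<times> (UNIV :: bool set))"
    using m finite_cylinders_meeting unfolding g_def by (intro card_mono) auto
  also have "\<dots> = 2 * card (cylinders_meeting s C n)" by (simp add: card_cartesian_product)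
  finally show ?thesis .
qed

lemma card_packing_level_le:
  assumes s: "s \<ge> 2" and C: "C \<subseteq> {0<..<1} - sadic_points s"
    and P: "is_packing Phi ((1 / real s) ^ n1) C F" and "G \<subseteq> F"
  shows "card {p\<in>G. length_level (1 / real s) (snd p - fst p) = n}
           \<le> 2 * card (cylinders_meeting s C (Suc n))"
proof (rule card_disjoint_long_intervals_le[OF s C])
  fix p assume "p \<in> {p\<in>G. length_level (1 / real s) (snd p - fst p) = n}"
  then have p: "p \<in> F" "length_level (1 / real s) (snd p - fst p) = n" using \<open>G \<subseteq> F\<close> by auto
  have "(1 / real s) ^ Suc n < snd p - fst p"
    using length_level(1)[of "1 / real s" "snd p - fst p" n1] is_packingD[OF P p(1)] s p(2)
    by simp
  then show "1 / real s ^ Suc n < snd p - fst p \<and> {fst p<..<snd p} \<inter> C \<noteq> {}"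
    using is_packingD(3)[OF P p(1)] by (simp add: power_one_over)
next
  fix p p' assume "p \<in> {p\<in>G. length_level (1 / real s) (snd p - fst p) = n}"
    "p' \<in> {p\<in>G. length_level (1 / real s) (snd p - fst p) = n}" "p \<noteq> p'"
  then show "{fst p<..<snd p} \<inter> {fst p'<..<snd p'} = {}"
    using is_packing_disjoint[OF P] \<open>G \<subseteq> F\<close> by blast
qed

lemma sum_packing_powr_le:
  assumes s: "s \<ge> 2" and C: "C \<subseteq> {0<..<1} - sadic_points s" and \<alpha>: "0 \<le> \<alpha>" "\<alpha> < \<beta>"
    and count: "\<And>n. n \<ge> n1 \<Longrightarrow> real (card (cylinders_meeting s C n)) \<le> M * real s powr (\<alpha> * real n)"
    and P: "is_packing Phi ((1 / real s) ^ n1) C F" and G: "finite G" "G \<subseteq> F"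
  defines "r \<equiv> real s powr (\<alpha> - \<beta>)"
  shows "(\<Sum>p\<in>G. (snd p - fst p) powr \<beta>) \<le> 2 * M * real s powr \<alpha> * (r ^ n1 / (1 - r))"
proof -
  define q where "q = 1 / real s"
  define k where "k p = length_level q (snd p - fst p)" for p
  have q: "0 < q" "q < 1" using s unfolding q_def by auto
  have r: "0 < r" "r < 1" unfolding r_def using s \<alpha> by (auto intro: powr_less_one)
  have k: "n1 \<le> k p" "snd p - fst p \<le> q ^ k p" if "p \<in> G" for p
    using length_level[OF q, of "snd p - fst p" n1] is_packingD[OF P] that G
    unfolding k_def q_def by auto
  have "0 \<le> M * real s powr (\<alpha> * real n1)"
    using count[of n1] of_nat_0_le_iff order_trans by blast
  then have "0 \<le> M" using s by (simp add: zero_le_mult_iff)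
  have level: "real (card {p\<in>G. k p = n}) * (q ^ n) powr \<beta> \<le> 2 * M * real s powr \<alpha> * r ^ n"
    if "n \<in> k ` G" for n
  proof -
    have "n1 \<le> Suc n" using that k by force
    then have "real (card {p\<in>G. k p = n}) \<le> 2 * (M * real s powr (\<alpha> * real (Suc n)))"
      using card_packing_level_le[OF s C P G(2), of n] count[of "Suc n"]
      unfolding k_def q_def by linarith
    moreover have "real s powr (\<alpha> * real (Suc n)) * (q ^ n) powr \<beta> = real s powr \<alpha> * r ^ n"
      using s unfolding q_def r_def
      by (simp add: powr_divide powr_realpow[symmetric] powr_powr powr_minus_divide
          powr_add[symmetric] powr_diff algebra_simps)
    ultimately show ?thesis
      by (metis (no_types, lifting) mult_right_mono mult.assoc powr_ge_zero)
  qed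
  have "(\<Sum>p\<in>G. (snd p - fst p) powr \<beta>) \<le> (\<Sum>p\<in>G. (q ^ k p) powr \<beta>)"
    using k is_packingD(1)[OF P] G \<alpha> by (intro sum_mono powr_mono2) (auto simp: less_imp_le)
  also have "\<dots> = (\<Sum>n\<in>k ` G. \<Sum>p\<in>{p\<in>G. k p = n}. (q ^ k p) powr \<beta>)"
    using G(1) by (rule sum.image_gen)
  also have "\<dots> = (\<Sum>n\<in>k ` G. real (card {p\<in>G. k p = n}) * (q ^ n) powr \<beta>)"
    by (intro sum.cong) auto
  also have "\<dots> \<le> (\<Sum>n\<in>k ` G. 2 * M * real s powr \<alpha> * r ^ n)"
    using level by (rule sum_mono)
  also have "\<dots> \<le> 2 * M * real s powr \<alpha> * (r ^ n1 / (1 - r))"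
    unfolding sum_distrib_left[symmetric] using r G k \<open>0 \<le> M\<close>
    by (intro mult_left_mono sum_power_le_geometric) auto
  finally show ?thesis .
qed

lemma pack_zero_eq_0_if_cylinder_count_bounded:
  assumes s: "s \<ge> 2" and C: "C \<subseteq> {0<..<1} - sadic_points s" "cylinder_count_bounded s \<alpha> C"
    and \<alpha>: "0 \<le> \<alpha>" "\<alpha> < \<beta>"
  shows "pack_zero Phi \<beta> C = 0"
proof (rule pack_zero_eq_0I)
  fix \<delta> :: real assume "\<delta> > 0"
  obtain M n0 where count: "\<And>n. n \<ge> n0 \<Longrightarrow> real (card (cylinders_meeting s C n)) \<le> M * real s powr (\<alpha> * real n)"
    using C(2) unfolding cylinder_count_bounded_def by blast
  define r where "r = real s powr (\<alpha> - \<beta>)"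
  have r: "0 < r" "r < 1" unfolding r_def using s \<alpha> by (auto intro: powr_less_one)
  have "(\<lambda>n. 2 * M * real s powr \<alpha> * (r ^ n / (1 - r))) \<longlonglongrightarrow> 0"
    using r by (intro tendsto_mult_right_zero tendsto_divide_zero LIMSEQ_power_zero) auto
  then have "\<forall>\<^sub>F n in sequentially. 2 * M * real s powr \<alpha> * (r ^ n / (1 - r)) < \<delta> \<and> n \<ge> n0"
    using \<open>\<delta> > 0\<close> by (intro eventually_conj order_tendstoD(2) eventually_ge_at_top)
  then obtain n1 where n1: "2 * M * real s powr \<alpha> * (r ^ n1 / (1 - r)) < \<delta>" "n1 \<ge> n0"
    unfolding eventually_sequentially by blast
  have "pack_eps Phi \<beta> ((1 / real s) ^ n1) C \<le> ennreal \<delta>"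
  proof (rule pack_eps_le_finite_sums)
    fix F G assume "is_packing Phi ((1 / real s) ^ n1) C F" "finite G" "G \<subseteq> F"
    then have "(\<Sum>p\<in>G. (snd p - fst p) powr \<beta>) \<le> 2 * M * real s powr \<alpha> * (r ^ n1 / (1 - r))"
      unfolding r_def using n1(2) count by (intro sum_packing_powr_le[OF s C(1) \<alpha>]) auto
    with n1(1) show "(\<Sum>p\<in>G. (snd p - fst p) powr \<beta>) \<le> \<delta>" by simp
  qed
  moreover have "(1 / real s) ^ n1 > 0" using s by simp
  ultimately show "\<exists>eps>0. pack_eps Phi \<beta> eps C \<le> ennreal \<delta>" by blast
qed

lemma pack_measure_eq_0_if_cylinder_count_bounded:
  fixes C :: "nat \<Rightarrow> real set"
  assumes s: "s \<ge> 2" and E: "E \<subseteq> {0..1}" "E \<subseteq> (\<Union>j. C j)"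
    and C: "\<And>j. cylinder_count_bounded s \<alpha> (C j)" and \<alpha>: "0 \<le> \<alpha>" "\<alpha> < \<beta>"
  shows "pack_measure Phi \<beta> E = 0"
proof (rule pack_measure_eq_0_mod_countable)
  show "0 < \<beta>" "countable (sadic_points s)" using \<alpha> countable_sadic_points by auto
  have "0 \<in> sadic_points s" "1 \<in> sadic_points s"
    using sadic_pointI[of 0 s 0] sadic_pointI[of 1 s 0] by simp_all
  then have "E - sadic_points s \<subseteq> {0<..<1}"
    using E(1) by (force simp: less_le)
  then show "E - sadic_points s \<subseteq> (\<Union>j. C j \<inter> {0<..<1} - sadic_points s)"
    using E(2) by blast
  fix j
  have count: "cylinder_count_bounded s \<alpha> (C j \<inter> {0<..<1} - sadic_points s)"
    by (rule cylinder_count_bounded_mono[OF C]) blast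
  show "pack_zero Phi \<beta> (C j \<inter> {0<..<1} - sadic_points s) = 0"
    using pack_zero_eq_0_if_cylinder_count_bounded[OF s _ count \<alpha>] by blast
qed

lemma pack_measure_eq_0_if_s_adic_finite:
  assumes s: "s \<ge> 2" and E: "E \<subseteq> {0..1}" and \<alpha>: "0 \<le> \<alpha>" "\<alpha> < \<beta>"
    and fin: "pack_measure (s_adic_cylinders s) \<alpha> E < \<infinity>"
  shows "pack_measure Phi \<beta> E = 0"
proof -
  obtain C :: "nat \<Rightarrow> real set" where cover: "E \<subseteq> (\<Union>j. C j)"
    and sum: "(\<Sum>j. pack_zero (s_adic_cylinders s) \<alpha> (C j)) < \<infinity>"
    using fin unfolding pack_measure_def INF_less_iff by auto
  have "pack_zero (s_adic_cylinders s) \<alpha> (C j) < \<infinity>" for j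
    using sum by (rule ennreal_suminf_lessD)
  then have "cylinder_count_bounded s \<alpha> (C j)" for j
    by (rule cylinder_count_bounded_if_pack_zero_finite[OF s])
  then show ?thesis
    by (rule pack_measure_eq_0_if_cylinder_count_bounded[OF s E cover _ \<alpha>])
qed

theorem corollary4:
  fixes s :: nat and E :: "real set"
  assumes "2 \<le> s" and "E \<subseteq> {0..1}"
  shows "pack_dim (s_adic_cylinders s) E = dim_P_unc E"
  unfolding dim_P_unc_def
proof (rule pack_dim_eqI)
  show "pack_measure (s_adic_cylinders s) \<alpha> E = 0" if "pack_measure unc_intervals \<alpha> E = 0" for \<alpha>
    using pack_measure_mono[OF s_adic_cylinders_subset_unc_intervals, of s \<alpha> E] that assms(1)
    by simp
  have "pack_measure unc_intervals 2 E = 0"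
    using assms cylinder_count_bounded_1[of s]
    by (intro pack_measure_eq_0_if_cylinder_count_bounded[where C = "\<lambda>_. UNIV" and \<alpha> = 1]) auto
  then show "\<exists>\<alpha>\<ge>0. pack_measure unc_intervals \<alpha> E = 0" by (intro exI[of _ 2]) simp
  show "pack_measure unc_intervals \<beta> E = 0"
    if "0 \<le> \<alpha>" "\<alpha> < \<beta>" "pack_measure (s_adic_cylinders s) \<alpha> E = 0" for \<alpha> \<beta>
    using that assms by (intro pack_measure_eq_0_if_s_adic_finite) auto
qed

end
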